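(* Let $n\geq 3$, $j\in\{2,\dots,n-1\}$, $p\in[0,1)$ and $\lambda\in(0,1)$. Then there exist origin-symmetric convex bodies $K$ and $L$ in $\mathbb R^n$ such that $$V_j\big((1-\lambda)\cdot K+_p\lambda\cdot L\big)<V_j(K)^{1-\lambda}V_j(L)^{\lambda}\leq \Big((1-\lambda)V_j(K)^{p/j}+\lambda V_j(L)^{p/j}\Big)^{j/p},$$ where for $p=0$ the right-most expression is understood as $V_j(K)^{1-\lambda}V_j(L)^\lambda$.
   Context: A convex body is a compact convex subset of $\mathbb R^n$ with nonempty interior; it is (origin-)symmetric if $K=-K$. The support function is $h_K(x)=\max_{y\in K}\langle x,y\rangle$. For a continuous $f:\mathbb S^{n-1}\to(0,\infty)$, its Wulff shape $W(f)$ is the largest convex body whose support function is $\le f$ on $\mathbb S^{n-1}$. For convex bodies $K,L$ containing the origin in their interior, $\lambda\in(0,1)$, the $L_p$-Minkowski combination is $(1-\lambda)\cdot K+_p\lambda\cdot L:=W\big(((1-\lambda)h_K^p+\lambda h_L^p)^{1/p}\big)$ for $p\neq 0$ and $W(h_K^{1-\lambda}h_L^\lambda)$ for $p=0$. The intrinsic volumes $V_0(K),\dots,V_n(K)$ are defined by the Steiner formula $V_n(K+\rho B_2^n)=\sum_{j=0}^n\rho^{n-j}\kappa_{n-j}V_j(K)$ for $\rho>0$, where $V_n$ is volume, $B_2^n$ the Euclidean unit ball and $\kappa_d$ the volume of the $d$-dimensional unit ball. *)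

theory Defs
  imports "HOL-Analysis.Analysis"
begin

definition convex_body :: "'a::euclidean_space set \<Rightarrow> bool" where
  "convex_body K \<longleftrightarrow> compact K \<and> convex K \<and> interior K \<noteq> {}"

definition origin_symmetric :: "'a::euclidean_space set \<Rightarrow> bool" where
  "origin_symmetric K \<longleftrightarrow> uminus ` K = K"

definition support_fun :: "'a::euclidean_space set \<Rightarrow> 'a \<Rightarrow> real" where
  "support_fun K x = (SUP y\<in>K. x \<bullet> y)"

text \<open>Wulff shape: the largest convex body whose support function is bounded by f on
  the unit sphere, i.e. the intersection of the half-spaces x.u <= f u, u on the sphere.\<close>
definition wulff :: "('a::euclidean_space \<Rightarrow> real) \<Rightarrow> 'a set" where
  "wulff f = {x. \<forall>u\<in>sphere 0 1. x \<bullet> u \<le> f u}"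

definition Lp_comb :: "real \<Rightarrow> real \<Rightarrow> 'a::euclidean_space set \<Rightarrow> 'a set \<Rightarrow> 'a set" where
  "Lp_comb p lam K L =
     (if p = 0 then wulff (\<lambda>u. support_fun K u powr (1 - lam) * support_fun L u powr lam)
      else wulff (\<lambda>u. ((1 - lam) * support_fun K u powr p + lam * support_fun L u powr p)
                       powr (1 / p)))"

definition kappa :: "nat \<Rightarrow> real" where
  "kappa d = pi powr (real d / 2) / Gamma (real d / 2 + 1)"

text \<open>Intrinsic volumes V_0..V_n, defined as the coefficients in the Steiner formula
  (set to 0 for indices beyond the dimension, to make them unique).\<close>
definition intrinsic_volume :: "nat \<Rightarrow> 'a::euclidean_space set \<Rightarrow> real" where
  "intrinsic_volume j K =
     (THE V. (\<forall>i>DIM('a). V i = 0) \<and>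
        (\<forall>\<rho>>0. measure lebesgue {x + y | x y. x \<in> K \<and> y \<in> cball 0 \<rho>}
               = (\<Sum>i\<le>DIM('a). \<rho> ^ (DIM('a) - i) * kappa (DIM('a) - i) * V i))) j"

end

(* Take for K and L the boxes [-1,1]^(n-1) x [-s,s] and [-1,1]^(n-1) x [-t,t]. The support
   function of a centred box with half-widths c_b is sum_b c_b |u_b|; as the power mean M_p is
   1-homogeneous and, for p < 1, superadditive, the L_p combination of K and L is again such a box,
   with last half-width M_p(s,t). The volume of the parallel body of a box is computed by slicing
   it coordinatewise; the Steiner formula then shows that V_j of a box is the j-th elementary
   symmetric function of its side lengths, so here V_j = 2^j (alpha + beta s) with alpha, beta > 0.
   Letting t -> 0, M_p(s,t) tends to M_p(s,0) < (1 - lam) s, while the geometric mean of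
   alpha + beta s and alpha + beta t tends to (alpha + beta s)^(1-lam) alpha^lam, which is larger
   for a suitable s > 0. The second inequality is the inequality between the geometric mean and
   the power mean of order p/j. *)
theory Submission
  imports Defs
begin

section \<open>Power means\<close>

definition power_mean :: "real \<Rightarrow> real \<Rightarrow> real \<Rightarrow> real \<Rightarrow> real" where
  "power_mean p lam x y =
     (if p = 0 then x powr (1 - lam) * y powr lam
      else ((1 - lam) * x powr p + lam * y powr p) powr (1 / p))"

lemma Lp_comb_eq_wulff_power_mean:
  "Lp_comb p lam K L = wulff (\<lambda>u. power_mean p lam (support_fun K u) (support_fun L u))"
  by (simp add: Lp_comb_def power_mean_def)

lemma power_mean_nonneg: "0 \<le> power_mean p lam x y"
  by (simp add: power_mean_def)

lemma power_mean_pos: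
  assumes "0 < x" "0 < y" "0 < lam" "lam < 1"
  shows "0 < power_mean p lam x y"
proof -
  have "0 < (1 - lam) * x powr p + lam * y powr p" using assms by (intro add_pos_pos) auto
  then show ?thesis using assms by (auto simp: power_mean_def)
qed

lemma power_mean_same:
  assumes "0 \<le> x"
  shows "power_mean p lam x x = x"
proof (cases "p = 0")
  case True
  then show ?thesis using assms
    by (cases "x = 0") (auto simp: power_mean_def powr_add [symmetric])
next
  case False
  have "(1 - lam) * x powr p + lam * x powr p = x powr p" by (simp add: algebra_simps)
  then show ?thesis using False assms by (simp add: power_mean_def powr_powr)
qed

lemma power_mean_mult:
  assumes "0 \<le> a" "0 \<le> x" "0 \<le> y" "0 \<le> p" "0 \<le> lam" "lam \<le> 1"
  shows "power_mean p lam (a * x) (a * y) = a * power_mean p lam x y"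
proof (cases "p = 0")
  case True
  then show ?thesis using assms
    by (cases "a = 0") (auto simp: power_mean_def powr_mult powr_add [symmetric] mult_ac)
next
  case False
  have "(1 - lam) * (a * x) powr p + lam * (a * y) powr p
      = a powr p * ((1 - lam) * x powr p + lam * y powr p)"
    using assms by (simp add: powr_mult algebra_simps)
  moreover have "(a powr p) powr (1 / p) = a" using assms False by (simp add: powr_powr)
  moreover have "0 \<le> (1 - lam) * x powr p + lam * y powr p" using assms by simp
  ultimately show ?thesis using False assms by (simp add: power_mean_def powr_mult)
qed

lemma tendsto_power_mean_at_right_0:
  assumes "0 < s" "0 < lam" "lam < 1" "0 \<le> p"
  shows "((\<lambda>t. power_mean p lam s t) \<longlongrightarrow> power_mean p lam s 0) (at_right 0)"
proof -
  have powr_0: "((\<lambda>t. t powr q) \<longlongrightarrow> 0) (at_right 0)" if "0 < q" for q :: real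
    using that eventually_at_right_less[of "0::real"]
    by (intro tendsto_zero_powrI[OF tendsto_ident_at tendsto_const]) (auto elim: eventually_mono)
  show ?thesis
  proof (cases "p = 0")
    case True
    have "((\<lambda>t. s powr (1 - lam) * t powr lam) \<longlongrightarrow> s powr (1 - lam) * 0) (at_right 0)"
      using assms by (intro tendsto_mult tendsto_const powr_0)
    then show ?thesis using True by (simp add: power_mean_def)
next
    case False
    have "((\<lambda>t. (1 - lam) * s powr p + lam * t powr p) \<longlongrightarrow> (1 - lam) * s powr p + lam * 0)
        (at_right 0)"
      using assms False by (intro tendsto_intros powr_0) auto
    then have "((\<lambda>t. ((1 - lam) * s powr p + lam * t powr p) powr (1 / p))
        \<longlongrightarrow> ((1 - lam) * s powr p + lam * 0) powr (1 / p)) (at_right 0)"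
      using assms by (intro tendsto_powr tendsto_const) auto
    then show ?thesis using False by (simp add: power_mean_def)
  qed
qed

lemma power_mean_zero_right_less:
  assumes "0 \<le> p" "p < 1" "0 < lam" "lam < 1"
  shows "power_mean p lam 1 0 < 1 - lam"
proof (cases "p = 0")
  case False
  then have "(1 - lam) powr (1 / p) < (1 - lam) powr 1"
    using assms by (intro powr_less_mono') (auto simp: field_simps)
  then show ?thesis using False assms by (simp add: power_mean_def)
qed (use assms in \<open>simp add: power_mean_def\<close>)

lemma exists_affine_less_powr:
  fixes a c :: real
  assumes "0 \<le> c" "c < a"
  shows "\<exists>x>0. 1 + c * x < (1 + x) powr a"
proof -
  define x where "x = (1 - c / a) / 2"
  have a: "0 < a" using assms by linarith
  have q: "0 \<le> c / a" "c / a < 1" using assms a by (auto simp: divide_less_eq)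
  have x: "0 < x" "x \<le> 1" using q by (auto simp: x_def)
  have "c = a * (c / a)" using a by simp
  also have "\<dots> < a * (1 - x)"
    using a q(2) by (intro mult_strict_left_mono) (auto simp: x_def field_simps)
  finally have "c * x < a * (1 - x) * x" using x by (intro mult_strict_right_mono)
  then have "1 + c * x < 1 + a * (x - x\<^sup>2)" by (simp add: power2_eq_square algebra_simps)
  also have "\<dots> \<le> 1 + a * ln (1 + x)"
    using ln_one_plus_pos_lower_bound[of x] x a by simp
  also have "\<dots> \<le> exp (a * ln (1 + x))" by (rule exp_ge_add_one_self)
  also have "\<dots> = (1 + x) powr a" using x by (simp add: powr_def mult_ac)
  finally show ?thesis using x by blast
qed

(* As t -> 0, power_mean p lam s t tends to power_mean p lam s 0 < (1 - lam) * s, whereas the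
   geometric mean of alpha + beta * s and alpha grows in s with initial slope (1 - lam) * beta. *)
lemma exists_affine_power_mean_less_geometric_mean:
  fixes \<alpha> \<beta> :: real
  assumes "0 < \<alpha>" "0 < \<beta>" and lam: "0 < lam" "lam < 1" and p: "0 \<le> p" "p < 1"
  shows "\<exists>s>0. \<exists>t>0. \<alpha> + \<beta> * power_mean p lam s t < power_mean 0 lam (\<alpha> + \<beta> * s) (\<alpha> + \<beta> * t)"
proof -
  define c where "c = power_mean p lam 1 0"
  have "0 \<le> c" "c < 1 - lam"
    unfolding c_def using power_mean_nonneg power_mean_zero_right_less[OF p lam] by auto
  then obtain x where x: "0 < x" "1 + c * x < (1 + x) powr (1 - lam)"
    using exists_affine_less_powr by blast
  define s where "s = \<alpha> * x / \<beta>"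
  have s: "0 < s" using assms x by (simp add: s_def)
  have "\<alpha> + \<beta> * power_mean p lam s 0 = \<alpha> * (1 + c * x)"
    using power_mean_mult[of s 1 0 p lam] s assms by (simp add: c_def s_def algebra_simps)
  also have "\<dots> < \<alpha> * (1 + x) powr (1 - lam)" using assms x by simp
  also have "\<dots> = power_mean 0 lam (\<alpha> * (1 + x)) (\<alpha> * 1)"
    using power_mean_mult[of \<alpha> "1 + x" 1 0 lam] assms x by (simp add: power_mean_def)
  also have "\<dots> = power_mean 0 lam (\<alpha> + \<beta> * s) (\<alpha> + \<beta> * 0)"
    using assms by (simp add: s_def algebra_simps)
  finally have gap: "0 < power_mean 0 lam (\<alpha> + \<beta> * s) (\<alpha> + \<beta> * 0) - (\<alpha> + \<beta> * power_mean p lam s 0)"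
    by simp
  have "((\<lambda>t. power_mean 0 lam (\<alpha> + \<beta> * s) (\<alpha> + \<beta> * t)) \<longlongrightarrow> power_mean 0 lam (\<alpha> + \<beta> * s) (\<alpha> + \<beta> * 0))
      (at_right 0)"
    unfolding power_mean_def using assms by (auto intro!: tendsto_eq_intros)
  then have "((\<lambda>t. power_mean 0 lam (\<alpha> + \<beta> * s) (\<alpha> + \<beta> * t) - (\<alpha> + \<beta> * power_mean p lam s t))
      \<longlongrightarrow> power_mean 0 lam (\<alpha> + \<beta> * s) (\<alpha> + \<beta> * 0) - (\<alpha> + \<beta> * power_mean p lam s 0)) (at_right 0)"
    using s lam p by (intro tendsto_intros tendsto_power_mean_at_right_0)
  then have "\<forall>\<^sub>F t in at_right 0. 0 < t \<and>
      0 < power_mean 0 lam (\<alpha> + \<beta> * s) (\<alpha> + \<beta> * t) - (\<alpha> + \<beta> * power_mean p lam s t)"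
    using gap by (intro eventually_conj eventually_at_right_less order_tendstoD(1))
  then obtain t where "0 < t"
    "0 < power_mean 0 lam (\<alpha> + \<beta> * s) (\<alpha> + \<beta> * t) - (\<alpha> + \<beta> * power_mean p lam s t)"
    using eventually_happens'[OF trivial_limit_at_right_real] by blast
  then show ?thesis using s by auto
qed

lemma geometric_mean_le_power_mean:
  assumes "0 < x" "0 < y" "0 < lam" "lam < 1" "0 < q"
  shows "power_mean 0 lam x y \<le> power_mean q lam x y"
proof -
  have "(x powr q) powr (1 - lam) * (y powr q) powr lam \<le> (1 - lam) * x powr q + lam * y powr q"
    using Youngs_inequality_0[of "1 - lam" lam "x powr q" "y powr q"] assms by simp
  moreover have "(x powr q) powr (1 - lam) * (y powr q) powr lam
      = (x powr (1 - lam) * y powr lam) powr q"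
    using assms by (simp add: powr_powr powr_mult mult_ac)
  ultimately have "((x powr (1 - lam) * y powr lam) powr q) powr (1 / q)
      \<le> ((1 - lam) * x powr q + lam * y powr q) powr (1 / q)"
    using assms by (intro powr_mono2) auto
  then show ?thesis using assms by (simp add: power_mean_def powr_powr)
qed

lemma convex_combination_powr_le:
  fixes p r a b :: real
  assumes "0 < p" "p < 1" "0 \<le> r" "r \<le> 1" "0 < a" "0 < b"
  shows "r * a powr p + (1 - r) * b powr p \<le> (r * a + (1 - r) * b) powr p"
proof -
  define m where "m = r * a + (1 - r) * b"
  have m: "0 < m" unfolding m_def using assms
    by (cases "r = 0") (auto intro: add_pos_nonneg)
  have young: "(z / m) powr p \<le> p * (z / m) + (1 - p)" if "0 < z" for z
    using Youngs_inequality_0[of p "1 - p" "z / m" 1] assms that m by simp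
  have "(r * a powr p + (1 - r) * b powr p) / m powr p = r * (a / m) powr p + (1 - r) * (b / m) powr p"
    using assms m by (simp add: powr_divide add_divide_distrib)
  also have "\<dots> \<le> r * (p * (a / m) + (1 - p)) + (1 - r) * (p * (b / m) + (1 - p))"
    using young[of a] young[of b] assms by (intro add_mono mult_left_mono) auto
  also have "\<dots> = p * ((r * a + (1 - r) * b) / m) + (1 - p)" using m by (simp add: field_simps)
  also have "\<dots> = p * (m / m) + (1 - p)" by (simp add: m_def)
  also have "\<dots> = 1" using m by simp
  finally show ?thesis using m by (simp add: m_def divide_le_eq)
qed

lemma geometric_mean_superadditive:
  assumes "0 < x1" "0 < x2" "0 < y1" "0 < y2" "0 \<le> lam" "lam \<le> 1"
  shows "power_mean 0 lam x1 y1 + power_mean 0 lam x2 y2 \<le> power_mean 0 lam (x1 + x2) (y1 + y2)"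
proof -
  define X Y where "X = x1 + x2" and "Y = y1 + y2"
  have XY: "0 < X" "0 < Y" using assms by (auto simp: X_def Y_def)
  have young: "x powr (1 - lam) * y powr lam / (X powr (1 - lam) * Y powr lam)
      \<le> (1 - lam) * (x / X) + lam * (y / Y)" if "0 < x" "0 < y" for x y
    using Youngs_inequality_0[of "1 - lam" lam "x / X" "y / Y"] assms that XY
    by (simp add: powr_divide)
  have "(x1 powr (1 - lam) * y1 powr lam + x2 powr (1 - lam) * y2 powr lam)
      / (X powr (1 - lam) * Y powr lam)
      \<le> (1 - lam) * (x1 / X) + lam * (y1 / Y) + ((1 - lam) * (x2 / X) + lam * (y2 / Y))"
    using young[of x1 y1] young[of x2 y2] assms by (simp add: add_divide_distrib)
  also have "\<dots> = (1 - lam) * ((x1 + x2) / X) + lam * ((y1 + y2) / Y)"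
    using XY by (simp add: field_simps)
  also have "\<dots> = (1 - lam) * (X / X) + lam * (Y / Y)" by (simp add: X_def Y_def)
  also have "\<dots> = 1" using XY by simp
  finally show ?thesis using XY by (simp add: power_mean_def X_def Y_def divide_le_eq)
qed

lemma power_mean_superadditive:
  assumes x: "0 < x1" "0 < x2" and y: "0 < y1" "0 < y2"
    and lam: "0 < lam" "lam < 1" and p: "0 \<le> p" "p < 1"
  shows "power_mean p lam x1 y1 + power_mean p lam x2 y2 \<le> power_mean p lam (x1 + x2) (y1 + y2)"
proof (cases "p = 0")
  case True
  then show ?thesis using geometric_mean_superadditive assms by simp
next
  case False
  then have p0: "0 < p" using p by simp
  define G where "G x y = (1 - lam) * x powr p + lam * y powr p" for x y
  have G_pos: "0 < G x y" if "0 < x" "0 < y" for x y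
    unfolding G_def using that lam by (intro add_pos_pos) auto
  have M_G: "power_mean p lam x y = G x y powr (1 / p)" for x y
    using False by (simp add: power_mean_def G_def)
  define F1 F2 where "F1 = power_mean p lam x1 y1" and "F2 = power_mean p lam x2 y2"
  define T where "T = F1 + F2"
  have F: "0 < F1" "0 < F2" unfolding F1_def F2_def using power_mean_pos x y lam by auto
  then have T: "0 < T" by (simp add: T_def)
  have G_normalized: "G (x / F) (y / F) = 1" if "F = power_mean p lam x y" "0 < x" "0 < y" for F x y
  proof -
    have "F powr p = G x y" using that G_pos[of x y] p0 by (simp add: M_G powr_powr)
    moreover have "0 < F" using that power_mean_pos lam by simp
    ultimately show ?thesis
      using that G_pos[of x y] by (simp add: G_def powr_divide add_divide_distrib [symmetric])
  qed
  \<comment> \<open>\<open>G\<close> is concave, and \<open>((x1 + x2) / T, (y1 + y2) / T)\<close> is a convex combination of the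
    normalized points \<open>(x1 / F1, y1 / F1)\<close> and \<open>(x2 / F2, y2 / F2)\<close>, at which \<open>G = 1\<close>.\<close>
  define r where "r = F1 / T"
  have r: "0 \<le> r" "r \<le> 1" "1 - r = F2 / T" using F T by (auto simp: r_def T_def field_simps)
  have comb: "r * (z1 / F1) + (1 - r) * (z2 / F2) = (z1 + z2) / T" for z1 z2
    using F T r(3) by (simp add: r_def add_divide_distrib)
  have concave: "r * (z1 / F1) powr p + (1 - r) * (z2 / F2) powr p \<le> ((z1 + z2) / T) powr p"
    if "0 < z1" "0 < z2" for z1 z2
    unfolding comb [symmetric] using p0 p(2) r(1,2) F that
    by (intro convex_combination_powr_le) auto
  have "1 = r * G (x1 / F1) (y1 / F1) + (1 - r) * G (x2 / F2) (y2 / F2)"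
    using G_normalized F1_def F2_def x y by simp
  also have "\<dots> = (1 - lam) * (r * (x1 / F1) powr p + (1 - r) * (x2 / F2) powr p)
      + lam * (r * (y1 / F1) powr p + (1 - r) * (y2 / F2) powr p)"
    by (simp add: G_def algebra_simps)
  also have "\<dots> \<le> (1 - lam) * ((x1 + x2) / T) powr p + lam * ((y1 + y2) / T) powr p"
    using concave x y lam by (intro add_mono mult_left_mono) auto
  also have "\<dots> = G (x1 + x2) (y1 + y2) / T powr p"
    using x y T by (simp add: G_def powr_divide add_divide_distrib [symmetric])
  finally have "T powr p \<le> G (x1 + x2) (y1 + y2)" using T by (simp add: le_divide_eq)
  then have "(T powr p) powr (1 / p) \<le> G (x1 + x2) (y1 + y2) powr (1 / p)"
    using p0 T by (intro powr_mono2) auto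
  then show ?thesis using T p0 by (simp add: M_G [symmetric] F1_def F2_def T_def powr_powr)
qed

lemma power_mean_sum_le:
  assumes "finite A" "A \<noteq> {}" "\<And>i. i \<in> A \<Longrightarrow> 0 < x i \<and> 0 < y i"
    and "0 < lam" "lam < 1" "0 \<le> p" "p < 1"
  shows "(\<Sum>i\<in>A. power_mean p lam (x i) (y i)) \<le> power_mean p lam (\<Sum>i\<in>A. x i) (\<Sum>i\<in>A. y i)"
  using assms(1-3)
proof (induction A rule: finite_ne_induct)
  case (insert i A)
  have "0 < sum x A" "0 < sum y A"
    using insert.hyps insert.prems by (auto intro!: sum_pos)
  then have "power_mean p lam (x i) (y i) + power_mean p lam (sum x A) (sum y A)
      \<le> power_mean p lam (x i + sum x A) (y i + sum y A)"
    using insert.prems assms(4-) by (intro power_mean_superadditive) auto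
  then show ?case using insert by fastforce
qed simp

section \<open>Centred boxes and their \<open>L\<^sub>p\<close> combinations\<close>

definition centered_box :: "('a::euclidean_space \<Rightarrow> real) \<Rightarrow> 'a set" where
  "centered_box c = {x. \<forall>b\<in>Basis. \<bar>x \<bullet> b\<bar> \<le> c b}"

lemma centered_box_eq_cbox:
  "centered_box c = cbox (- (\<Sum>b\<in>Basis. c b *\<^sub>R b)) (\<Sum>b\<in>Basis. c b *\<^sub>R b)"
  by (auto simp: centered_box_def mem_box abs_le_iff minus_le_iff)

lemma convex_body_centered_box:
  assumes "\<And>b. b \<in> Basis \<Longrightarrow> 0 < c b"
  shows "convex_body (centered_box c)"
proof -
  have "0 \<in> box (- (\<Sum>b\<in>Basis. c b *\<^sub>R b)) (\<Sum>b\<in>Basis. c b *\<^sub>R b)"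
    using assms by (auto simp: mem_box inner_sum_left_Basis)
  then show ?thesis
    unfolding convex_body_def centered_box_eq_cbox by (auto simp: convex_box interior_cbox)
qed

lemma origin_symmetric_centered_box: "origin_symmetric (centered_box c)"
proof -
  have "- x \<in> centered_box c" if "x \<in> centered_box c" for x
    using that by (simp add: centered_box_def)
  then show ?thesis
    unfolding origin_symmetric_def by (auto intro: image_eqI[where x = "- x" for x])
qed

lemma inner_le_sum_centered_box:
  assumes "z \<in> centered_box c"
  shows "u \<bullet> z \<le> (\<Sum>b\<in>Basis. c b * \<bar>u \<bullet> b\<bar>)"
proof -
  have "u \<bullet> z = (\<Sum>b\<in>Basis. (u \<bullet> b) * (z \<bullet> b))" by (rule euclidean_inner)
  also have "\<dots> \<le> (\<Sum>b\<in>Basis. \<bar>u \<bullet> b\<bar> * \<bar>z \<bullet> b\<bar>)"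
    by (intro sum_mono) (metis abs_ge_self abs_mult)
  also have "\<dots> \<le> (\<Sum>b\<in>Basis. \<bar>u \<bullet> b\<bar> * c b)"
    using assms by (intro sum_mono mult_left_mono) (auto simp: centered_box_def)
  finally show ?thesis by (simp add: mult.commute)
qed

lemma support_fun_centered_box:
  assumes "\<And>b. b \<in> Basis \<Longrightarrow> 0 \<le> c b"
  shows "support_fun (centered_box c) u = (\<Sum>b\<in>Basis. c b * \<bar>u \<bullet> b\<bar>)"
  unfolding support_fun_def
proof (rule cSup_eq_maximum)
  define y where "y = (\<Sum>b\<in>Basis. (c b * sgn (u \<bullet> b)) *\<^sub>R b)"
  have "y \<in> centered_box c"
    using assms by (auto simp: centered_box_def y_def inner_sum_left_Basis abs_mult abs_sgn_eq)
  moreover have "u \<bullet> y = (\<Sum>b\<in>Basis. c b * \<bar>u \<bullet> b\<bar>)"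
    by (subst euclidean_inner)
      (auto simp: y_def inner_sum_left_Basis abs_sgn intro!: sum.cong)
  ultimately show "(\<Sum>b\<in>Basis. c b * \<bar>u \<bullet> b\<bar>) \<in> (\<bullet>) u ` centered_box c" by force
qed (auto intro: inner_le_sum_centered_box)

lemma support_fun_centered_box_Basis:
  assumes "\<And>b. b \<in> Basis \<Longrightarrow> 0 \<le> c b" "b \<in> Basis"
  shows "support_fun (centered_box c) b = c b" "support_fun (centered_box c) (- b) = c b"
  using assms by (simp_all add: support_fun_centered_box inner_Basis if_distrib sum.delta cong: if_cong)

(* Since the support function sum_b c_b |u_b| is linear in the half-widths, homogeneity and
   superadditivity of the power mean bound the defining function of the Wulff shape from below by
   the support function of the box on the right; in the directions +-b the two agree. *)
lemma Lp_comb_centered_box: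
  assumes c: "\<And>b. b \<in> Basis \<Longrightarrow> 0 < c b" and d: "\<And>b. b \<in> Basis \<Longrightarrow> 0 < d b"
    and lam: "0 < lam" "lam < 1" and p: "0 \<le> p" "p < 1"
  shows "Lp_comb p lam (centered_box c) (centered_box d)
       = centered_box (\<lambda>b. power_mean p lam (c b) (d b))"
    (is "_ = centered_box ?m")
proof -
  let ?h = "\<lambda>u. power_mean p lam (support_fun (centered_box c) u) (support_fun (centered_box d) u)"
  have "\<bar>x \<bullet> b\<bar> \<le> ?m b" if x: "x \<in> wulff ?h" and b: "b \<in> Basis" for x b
  proof -
    have "b \<in> sphere 0 1" "- b \<in> sphere 0 1" using b by auto
    then have "x \<bullet> b \<le> ?h b" "x \<bullet> (- b) \<le> ?h (- b)"
      using x unfolding wulff_def by blast+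
    then show ?thesis
      using b c d by (auto simp: support_fun_centered_box_Basis less_imp_le)
  qed
  moreover have "x \<bullet> u \<le> ?h u" if x: "x \<in> centered_box ?m" and u: "u \<in> sphere 0 1" for x u
  proof -
    define B where "B = {b \<in> Basis. u \<bullet> b \<noteq> 0}"
    have B: "finite B" "B \<subseteq> Basis" "B \<noteq> {}"
      using u euclidean_all_zero_iff[of u] by (auto simp: B_def)
    have sum_B: "(\<Sum>b\<in>Basis. f b * \<bar>u \<bullet> b\<bar>) = (\<Sum>b\<in>B. f b * \<bar>u \<bullet> b\<bar>)" for f
      by (rule sum.mono_neutral_right) (auto simp: B_def)
    have "x \<bullet> u \<le> (\<Sum>b\<in>B. ?m b * \<bar>u \<bullet> b\<bar>)"
      using inner_le_sum_centered_box[OF x, of u] by (simp only: inner_commute[of x] sum_B)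
    also have "\<dots> = (\<Sum>b\<in>B. power_mean p lam (c b * \<bar>u \<bullet> b\<bar>) (d b * \<bar>u \<bullet> b\<bar>))"
    proof (intro sum.cong refl)
      fix b assume "b \<in> B"
      then have "power_mean p lam (\<bar>u \<bullet> b\<bar> * c b) (\<bar>u \<bullet> b\<bar> * d b) = \<bar>u \<bullet> b\<bar> * ?m b"
        using B c d p lam by (intro power_mean_mult) (auto simp: less_imp_le)
      then show "?m b * \<bar>u \<bullet> b\<bar> = power_mean p lam (c b * \<bar>u \<bullet> b\<bar>) (d b * \<bar>u \<bullet> b\<bar>)"
        by (simp add: mult.commute)
    qed
    also have "\<dots> \<le> power_mean p lam (\<Sum>b\<in>B. c b * \<bar>u \<bullet> b\<bar>) (\<Sum>b\<in>B. d b * \<bar>u \<bullet> b\<bar>)"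
      using B c d lam p by (intro power_mean_sum_le) (auto simp: B_def)
    also have "\<dots> = ?h u"
      using c d by (simp add: support_fun_centered_box less_imp_le sum_B)
    finally show ?thesis .
  qed
  ultimately show ?thesis
    unfolding Lp_comb_eq_wulff_power_mean by (auto simp: centered_box_def wulff_def)
qed

section \<open>The volume of the parallel body of a box\<close>

lemma nn_integral_chord_power:
  fixes r :: real
  assumes "0 < r"
  shows "(\<integral>\<^sup>+ y. ennreal (indicator {-r..r} y * sqrt (r\<^sup>2 - y\<^sup>2) ^ m) \<partial>lborel)
       = ennreal (r ^ Suc m * Beta (1/2) (real m / 2 + 1))"
proof -
  have "(\<integral>\<^sup>+ y. ennreal (indicator {-r..r} y * sqrt (r\<^sup>2 - y\<^sup>2) ^ m) \<partial>lborel)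
      = (\<integral>\<^sup>+ y. r ^ m * indicator {-1..1} y * (sqrt (1 - y\<^sup>2)) ^ m \<partial>distr lborel borel ((*) (1/r)))"
    using assms by (subst nn_integral_distr)
      (auto simp: indicator_def field_simps real_sqrt_divide power_mult_distrib intro!: nn_integral_cong)
  also have "\<dots> = (\<integral>\<^sup>+ y. ennreal (r ^ Suc m) * (indicator {-1..1} y * sqrt (1 - y\<^sup>2) ^ m) \<partial>lborel)"
    using assms by (subst lborel_distr_mult) (auto simp: nn_integral_density ennreal_mult' [symmetric] mult_ac)
  also have "\<dots> = ennreal (r ^ Suc m) * ennreal (Beta (1/2) (real m / 2 + 1))"
    by (subst nn_integral_cmult) (auto simp: emeasure_cball_aux_integral)
  finally show ?thesis using assms by (simp add: ennreal_mult')
qed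

(* Cutting the real line at 0 and inserting a segment of length 2a on which h is constant h 0. *)
lemma nn_integral_stretch_at_0:
  fixes h :: "real \<Rightarrow> real"
  assumes a: "0 \<le> a" and h [measurable]: "h \<in> borel_measurable borel" and h_nonneg: "\<And>y. 0 \<le> h y"
  shows "(\<integral>\<^sup>+ y. ennreal (h (sgn y * max (\<bar>y\<bar> - a) 0)) \<partial>lborel)
       = ennreal (2 * a * h 0) + (\<integral>\<^sup>+ y. ennreal (h y) \<partial>lborel)"
proof -
  have pieces: "ennreal (h (sgn y * max (\<bar>y\<bar> - a) 0))
      = ennreal (h 0) * indicator {-a..a} y + ennreal (indicator {a<..} y * h (y - a))
        + ennreal (indicator {..< -a} y * h (y + a))" for y
    using a h_nonneg by (cases "y < -a" ; cases "a < y") (auto simp: indicator_def sgn_if add.commute)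
  have halves: "(\<integral>\<^sup>+ y. ennreal (indicator {0<..} y * h y) \<partial>lborel)
      + (\<integral>\<^sup>+ y. ennreal (indicator {..<0} y * h y) \<partial>lborel)
      = (\<integral>\<^sup>+ y. ennreal (h y) \<partial>lborel)"
  proof -
    have "AE y in lborel. y \<noteq> 0"
      using AE_not_in[OF countable_imp_null_set_lborel[of "{0}"]] by simp
    then have "(\<integral>\<^sup>+ y. ennreal (indicator {0<..} y * h y) + ennreal (indicator {..<0} y * h y) \<partial>lborel)
        = (\<integral>\<^sup>+ y. ennreal (h y) \<partial>lborel)"
      by (intro nn_integral_cong_AE) (auto simp: indicator_def elim!: eventually_mono)
    then show ?thesis by (simp add: nn_integral_add)
  qed
  have "(\<integral>\<^sup>+ y. ennreal (h (sgn y * max (\<bar>y\<bar> - a) 0)) \<partial>lborel)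
      = (\<integral>\<^sup>+ y. ennreal (h 0) * indicator {-a..a} y \<partial>lborel)
        + (\<integral>\<^sup>+ y. ennreal (indicator {a<..} y * h (y - a)) \<partial>lborel)
        + (\<integral>\<^sup>+ y. ennreal (indicator {..< -a} y * h (y + a)) \<partial>lborel)"
    unfolding pieces by (simp add: nn_integral_add)
  also have "(\<integral>\<^sup>+ y. ennreal (h 0) * indicator {-a..a} y \<partial>lborel) = ennreal (2 * a * h 0)"
    using a h_nonneg by (simp add: nn_integral_cmult_indicator ennreal_mult' [symmetric] mult_ac)
  also have "(\<integral>\<^sup>+ y. ennreal (indicator {a<..} y * h (y - a)) \<partial>lborel)
      = (\<integral>\<^sup>+ y. ennreal (indicator {0<..} y * h y) \<partial>lborel)"
    by (subst nn_integral_real_affine[where c = 1 and t = a]) (auto simp: indicator_def)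
  also have "(\<integral>\<^sup>+ y. ennreal (indicator {..< -a} y * h (y + a)) \<partial>lborel)
      = (\<integral>\<^sup>+ y. ennreal (indicator {..<0} y * h y) \<partial>lborel)"
    by (subst nn_integral_real_affine[where c = 1 and t = "-a"]) (auto simp: indicator_def)
  also have "ennreal (2 * a * h 0) + (\<integral>\<^sup>+ y. ennreal (indicator {0<..} y * h y) \<partial>lborel)
      + (\<integral>\<^sup>+ y. ennreal (indicator {..<0} y * h y) \<partial>lborel)
      = ennreal (2 * a * h 0) + (\<integral>\<^sup>+ y. ennreal (h y) \<partial>lborel)"
    using halves by (simp add: add.assoc)
  finally show ?thesis .
qed

lemma nn_integral_box_slice_power:
  fixes a r :: real
  assumes r: "0 < r" and a: "0 \<le> a"
  shows "(\<integral>\<^sup>+ y. ennreal (indicator {-(a + r)..a + r} y * sqrt (r\<^sup>2 - (max (\<bar>y\<bar> - a) 0)\<^sup>2) ^ m) \<partial>lborel)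
       = ennreal (2 * a * r ^ m + r ^ Suc m * Beta (1/2) (real m / 2 + 1))"
proof -
  have Beta_pos: "0 < Beta (1/2) (real m / 2 + 1)"
    unfolding Beta_def by (intro divide_pos_pos mult_pos_pos Gamma_real_pos) auto
  define H where "H u = indicator {-r..r} u * sqrt (r\<^sup>2 - u\<^sup>2) ^ m" for u :: real
  have H_nonneg: "0 \<le> H u" for u
    by (auto simp: H_def indicator_def abs_le_square_iff [symmetric])
  have [measurable]: "H \<in> borel_measurable borel" unfolding H_def by measurable
  have "indicator {-(a + r)..a + r} y * sqrt (r\<^sup>2 - (max (\<bar>y\<bar> - a) 0)\<^sup>2) ^ m
      = H (sgn y * max (\<bar>y\<bar> - a) 0)" for y
    using a r by (cases "0 < y"; cases "y < 0") (auto simp: H_def indicator_def power_mult_distrib)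
  then have "(\<integral>\<^sup>+ y. ennreal (indicator {-(a + r)..a + r} y * sqrt (r\<^sup>2 - (max (\<bar>y\<bar> - a) 0)\<^sup>2) ^ m) \<partial>lborel)
      = ennreal (2 * a * H 0) + (\<integral>\<^sup>+ y. ennreal (H y) \<partial>lborel)"
    using a H_nonneg by (simp add: nn_integral_stretch_at_0)
  also have "\<dots> = ennreal (2 * a * r ^ m) + ennreal (r ^ Suc m * Beta (1/2) (real m / 2 + 1))"
    using r by (simp add: H_def nn_integral_chord_power)
  finally show ?thesis using a r Beta_pos by (simp add: ennreal_plus)
qed

lemma unit_ball_vol_Suc:
  "unit_ball_vol (real m) * Beta (1/2) (real m / 2 + 1) = unit_ball_vol (real (Suc m))"
  by (auto simp: unit_ball_vol_def Beta_def Gamma_eq_zero_iff field_simps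
      Gamma_one_half_real powr_half_sqrt [symmetric] powr_add [symmetric])

(* The volume of the r-neighbourhood of the box prod_i [-a i, a i] in R^A: the summand for T
   is the part lying over the relative interiors of the faces spanned by the directions in T. *)
definition box_parallel_volume :: "'i set \<Rightarrow> ('i \<Rightarrow> real) \<Rightarrow> real \<Rightarrow> real" where
  "box_parallel_volume A a r =
     (\<Sum>T\<in>Pow A. (\<Prod>i\<in>T. 2 * a i) * unit_ball_vol (card (A - T)) * r ^ card (A - T))"

lemma box_parallel_volume_nonneg:
  "(\<And>i. i \<in> A \<Longrightarrow> 0 \<le> a i) \<Longrightarrow> 0 \<le> r \<Longrightarrow> 0 \<le> box_parallel_volume A a r"
  unfolding box_parallel_volume_def by (intro sum_nonneg mult_nonneg_nonneg prod_nonneg) auto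

lemma box_parallel_volume_insert:
  assumes "finite A" "i \<notin> A"
  shows "box_parallel_volume (insert i A) a r =
    (\<Sum>T\<in>Pow A. (\<Prod>j\<in>T. 2 * a j) *
       (2 * a i * unit_ball_vol (card (A - T)) * r ^ card (A - T)
        + unit_ball_vol (Suc (card (A - T))) * r ^ Suc (card (A - T))))"
proof -
  have inj: "inj_on (insert i) (Pow A)"
    using assms(2) by (intro inj_onI) (metis PowD insert_ident subsetD)
  have "box_parallel_volume (insert i A) a r =
      (\<Sum>T\<in>Pow A. (\<Prod>j\<in>T. 2 * a j) * unit_ball_vol (card (insert i A - T)) * r ^ card (insert i A - T))
      + (\<Sum>T\<in>insert i ` Pow A. (\<Prod>j\<in>T. 2 * a j) * unit_ball_vol (card (insert i A - T))
          * r ^ card (insert i A - T))"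
    unfolding box_parallel_volume_def Pow_insert using assms
    by (intro sum.union_disjoint) auto
  also have "(\<Sum>T\<in>Pow A. (\<Prod>j\<in>T. 2 * a j) * unit_ball_vol (card (insert i A - T)) * r ^ card (insert i A - T))
      = (\<Sum>T\<in>Pow A. (\<Prod>j\<in>T. 2 * a j) * unit_ball_vol (Suc (card (A - T))) * r ^ Suc (card (A - T)))"
  proof (intro sum.cong refl)
    fix T assume "T \<in> Pow A"
    then have "insert i A - T = insert i (A - T)" "i \<notin> A - T" using assms by auto
    then show "(\<Prod>j\<in>T. 2 * a j) * unit_ball_vol (card (insert i A - T)) * r ^ card (insert i A - T)
        = (\<Prod>j\<in>T. 2 * a j) * unit_ball_vol (Suc (card (A - T))) * r ^ Suc (card (A - T))"
      using assms by simp
  qed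
  also have "(\<Sum>T\<in>insert i ` Pow A. (\<Prod>j\<in>T. 2 * a j) * unit_ball_vol (card (insert i A - T))
          * r ^ card (insert i A - T))
      = (\<Sum>T\<in>Pow A. 2 * a i * (\<Prod>j\<in>T. 2 * a j) * unit_ball_vol (card (A - T)) * r ^ card (A - T))"
  proof (subst sum.reindex [OF inj], intro sum.cong refl)
    fix T assume "T \<in> Pow A"
    then have "insert i A - insert i T = A - T" "i \<notin> T" "finite T"
      using assms by (auto intro: finite_subset)
    then show "((\<lambda>T. (\<Prod>j\<in>T. 2 * a j) * unit_ball_vol (card (insert i A - T)) * r ^ card (insert i A - T))
        \<circ> insert i) T = 2 * a i * (\<Prod>j\<in>T. 2 * a j) * unit_ball_vol (card (A - T)) * r ^ card (A - T)"
      by simp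
  qed
  finally show ?thesis by (simp add: sum.distrib [symmetric] algebra_simps)
qed

lemma nn_integral_ennreal_sum_cmult:
  assumes "finite I" "\<And>i. i \<in> I \<Longrightarrow> 0 \<le> c i" "\<And>i x. i \<in> I \<Longrightarrow> 0 \<le> f i x"
    and "\<And>i. i \<in> I \<Longrightarrow> f i \<in> borel_measurable M"
  shows "(\<integral>\<^sup>+ x. ennreal (\<Sum>i\<in>I. c i * f i x) \<partial>M) = (\<Sum>i\<in>I. ennreal (c i) * (\<integral>\<^sup>+ x. ennreal (f i x) \<partial>M))"
proof -
  have "(\<integral>\<^sup>+ x. ennreal (\<Sum>i\<in>I. c i * f i x) \<partial>M) = (\<integral>\<^sup>+ x. (\<Sum>i\<in>I. ennreal (c i) * ennreal (f i x)) \<partial>M)"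
  proof (intro nn_integral_cong)
    fix x
    have "(\<Sum>i\<in>I. ennreal (c i) * ennreal (f i x)) = (\<Sum>i\<in>I. ennreal (c i * f i x))"
      using assms by (intro sum.cong) (auto simp: ennreal_mult)
    also have "\<dots> = ennreal (\<Sum>i\<in>I. c i * f i x)"
      using assms by (intro sum_ennreal) auto
    finally show "ennreal (\<Sum>i\<in>I. c i * f i x) = (\<Sum>i\<in>I. ennreal (c i) * ennreal (f i x))" ..
  qed
  also have "\<dots> = (\<Sum>i\<in>I. \<integral>\<^sup>+ x. ennreal (c i) * ennreal (f i x) \<partial>M)"
    using assms by (intro nn_integral_sum) auto
  also have "\<dots> = (\<Sum>i\<in>I. ennreal (c i) * (\<integral>\<^sup>+ x. ennreal (f i x) \<partial>M))"
    using assms by (intro sum.cong refl nn_integral_cmult) auto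
  finally show ?thesis .
qed

(* rho bounds the squared distance to the box prod_i [-a i, a i]. *)
definition box_neighbourhood_sq :: "'i set \<Rightarrow> ('i \<Rightarrow> real) \<Rightarrow> real \<Rightarrow> ('i \<Rightarrow> real) set" where
  "box_neighbourhood_sq A a \<rho> =
     {f \<in> space (Pi\<^sub>M A (\<lambda>_. lborel)). (\<Sum>i\<in>A. (max (\<bar>f i\<bar> - a i) 0)\<^sup>2) \<le> \<rho>}"

lemma box_neighbourhood_sq_empty: "\<rho> < 0 \<Longrightarrow> box_neighbourhood_sq A a \<rho> = {}"
  unfolding box_neighbourhood_sq_def
  by (auto simp: not_le intro: less_le_trans [OF _ sum_nonneg])

lemma emeasure_box_neighbourhood_sq_insert:
  fixes a :: "'i \<Rightarrow> real"
  assumes "finite A" "i \<notin> A"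
  shows "emeasure (Pi\<^sub>M (insert i A) (\<lambda>_. lborel)) (box_neighbourhood_sq (insert i A) a \<rho>)
       = (\<integral>\<^sup>+ y. emeasure (Pi\<^sub>M A (\<lambda>_. lborel))
            (box_neighbourhood_sq A a (\<rho> - (max (\<bar>y\<bar> - a i) 0)\<^sup>2)) \<partial>lborel)"
proof -
  interpret product_sigma_finite "\<lambda>_. lborel" by standard
  have sets: "box_neighbourhood_sq B a \<sigma> \<in> sets (Pi\<^sub>M B (\<lambda>_. lborel))" for B \<sigma>
    unfolding box_neighbourhood_sq_def by measurable
  have "emeasure (Pi\<^sub>M (insert i A) (\<lambda>_. lborel)) (box_neighbourhood_sq (insert i A) a \<rho>)
      = (\<integral>\<^sup>+ f. indicator (box_neighbourhood_sq (insert i A) a \<rho>) f \<partial>Pi\<^sub>M (insert i A) (\<lambda>_. lborel))"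
    using sets by simp
  also have "\<dots> = (\<integral>\<^sup>+ y. \<integral>\<^sup>+ f. indicator (box_neighbourhood_sq (insert i A) a \<rho>) (f(i := y))
      \<partial>Pi\<^sub>M A (\<lambda>_. lborel) \<partial>lborel)"
    using assms sets by (intro product_nn_integral_insert_rev) auto
  also have "\<dots> = (\<integral>\<^sup>+ y. \<integral>\<^sup>+ f. indicator (box_neighbourhood_sq A a (\<rho> - (max (\<bar>y\<bar> - a i) 0)\<^sup>2)) f
      \<partial>Pi\<^sub>M A (\<lambda>_. lborel) \<partial>lborel)"
  proof (intro nn_integral_cong)
    fix y :: real and f :: "'i \<Rightarrow> real"
    assume f: "f \<in> space (Pi\<^sub>M A (\<lambda>_. lborel))"
    then have "f(i := y) \<in> space (Pi\<^sub>M (insert i A) (\<lambda>_. lborel))"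
      by (auto simp: space_PiM PiE_def extensional_def)
    moreover have "(\<Sum>j\<in>A. (max (\<bar>(f(i := y)) j\<bar> - a j) 0)\<^sup>2) = (\<Sum>j\<in>A. (max (\<bar>f j\<bar> - a j) 0)\<^sup>2)"
      using assms by (intro sum.cong) auto
    ultimately have "f(i := y) \<in> box_neighbourhood_sq (insert i A) a \<rho>
        \<longleftrightarrow> f \<in> box_neighbourhood_sq A a (\<rho> - (max (\<bar>y\<bar> - a i) 0)\<^sup>2)"
      using f assms by (auto simp: box_neighbourhood_sq_def)
    then show "indicator (box_neighbourhood_sq (insert i A) a \<rho>) (f(i := y))
        = (indicator (box_neighbourhood_sq A a (\<rho> - (max (\<bar>y\<bar> - a i) 0)\<^sup>2)) f :: ennreal)"
      by (simp add: indicator_def)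
  qed
  finally show ?thesis using sets by simp
qed

lemma nn_integral_box_parallel_volume_slices:
  assumes "finite A" "i \<notin> A" and a: "\<And>j. j \<in> insert i A \<Longrightarrow> 0 \<le> a j" and r: "0 < r"
  shows "(\<integral>\<^sup>+ y. ennreal (indicator {-(a i + r)..a i + r} y
            * box_parallel_volume A a (sqrt (r\<^sup>2 - (max (\<bar>y\<bar> - a i) 0)\<^sup>2))) \<partial>lborel)
       = ennreal (box_parallel_volume (insert i A) a r)"
proof -
  define I where "I = {-(a i + r)..a i + r}"
  define h where "h m y = indicator I y * sqrt (r\<^sup>2 - (max (\<bar>y\<bar> - a i) 0)\<^sup>2) ^ m" for m y
  define coeff where "coeff T = (\<Prod>j\<in>T. 2 * a j) * unit_ball_vol (card (A - T))" for T
  have h_nonneg: "0 \<le> h m y" for m y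
    using r by (auto simp: h_def I_def indicator_def power2_le_iff_abs_le)
  have slice: "(\<integral>\<^sup>+ y. ennreal (h m y) \<partial>lborel)
      = ennreal (2 * a i * r ^ m + r ^ Suc m * Beta (1/2) (real m / 2 + 1))" for m
    unfolding h_def I_def using r a by (intro nn_integral_box_slice_power) auto
  have coeff_nonneg: "0 \<le> coeff T" if "T \<in> Pow A" for T
    using that a by (auto simp: coeff_def intro!: mult_nonneg_nonneg prod_nonneg)
  have "(\<integral>\<^sup>+ y. ennreal (indicator I y
      * box_parallel_volume A a (sqrt (r\<^sup>2 - (max (\<bar>y\<bar> - a i) 0)\<^sup>2))) \<partial>lborel)
      = (\<integral>\<^sup>+ y. ennreal (\<Sum>T\<in>Pow A. coeff T * h (card (A - T)) y) \<partial>lborel)"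
    by (intro nn_integral_cong)
      (simp add: box_parallel_volume_def coeff_def h_def sum_distrib_left mult_ac)
  also have "\<dots> = (\<Sum>T\<in>Pow A. ennreal (coeff T) * (\<integral>\<^sup>+ y. ennreal (h (card (A - T)) y) \<partial>lborel))"
    using assms coeff_nonneg h_nonneg
    by (intro nn_integral_ennreal_sum_cmult) (auto simp: h_def I_def)
  also have "\<dots> = (\<Sum>T\<in>Pow A. ennreal (coeff T * (2 * a i * r ^ card (A - T)
      + r ^ Suc (card (A - T)) * Beta (1/2) (real (card (A - T)) / 2 + 1))))"
    using coeff_nonneg by (intro sum.cong refl) (simp add: slice ennreal_mult')
  also have "\<dots> = (\<Sum>T\<in>Pow A. ennreal ((\<Prod>j\<in>T. 2 * a j) *
       (2 * a i * unit_ball_vol (card (A - T)) * r ^ card (A - T)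
        + unit_ball_vol (Suc (card (A - T))) * r ^ Suc (card (A - T)))))"
    by (intro sum.cong refl arg_cong [where f = ennreal], subst unit_ball_vol_Suc [symmetric])
      (simp add: coeff_def algebra_simps)
  also have "\<dots> = ennreal (box_parallel_volume (insert i A) a r)"
    using assms
    by (subst sum_ennreal)
      (auto simp: box_parallel_volume_insert intro!: mult_nonneg_nonneg prod_nonneg add_nonneg_nonneg)
  finally show ?thesis by (simp add: I_def)
qed

lemma emeasure_box_neighbourhood_sq:
  fixes a :: "'i \<Rightarrow> real"
  assumes "finite A" "\<And>i. i \<in> A \<Longrightarrow> 0 \<le> a i" "0 < r"
  shows "emeasure (Pi\<^sub>M A (\<lambda>_. lborel)) (box_neighbourhood_sq A a (r\<^sup>2))
       = ennreal (box_parallel_volume A a r)"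
  using assms
proof (induction arbitrary: r)
  case empty
  then show ?case
    by (simp add: box_neighbourhood_sq_def unit_ball_vol_def space_PiM box_parallel_volume_def)
next
  case (insert i A r)
  define g where "g y = (max (\<bar>y\<bar> - a i) 0)\<^sup>2" for y
  have "emeasure (Pi\<^sub>M (insert i A) (\<lambda>_. lborel)) (box_neighbourhood_sq (insert i A) a (r\<^sup>2))
      = (\<integral>\<^sup>+ y. emeasure (Pi\<^sub>M A (\<lambda>_. lborel)) (box_neighbourhood_sq A a (r\<^sup>2 - g y)) \<partial>lborel)"
    using insert.hyps by (simp add: emeasure_box_neighbourhood_sq_insert g_def)
  also have "\<dots> = (\<integral>\<^sup>+ y. ennreal (indicator {-(a i + r)..a i + r} y
      * box_parallel_volume A a (sqrt (r\<^sup>2 - g y))) \<partial>lborel)"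
  proof (intro nn_integral_cong_AE)
    have "AE y in lborel. y \<notin> {-(a i + r), a i + r}"
      by (intro AE_not_in countable_imp_null_set_lborel) auto
    then show "AE y in lborel. emeasure (Pi\<^sub>M A (\<lambda>_. lborel)) (box_neighbourhood_sq A a (r\<^sup>2 - g y))
        = ennreal (indicator {-(a i + r)..a i + r} y * box_parallel_volume A a (sqrt (r\<^sup>2 - g y)))"
    proof eventually_elim
      case (elim y)
      show ?case
      proof (cases "\<bar>y\<bar> < a i + r")
        case True
        then have "0 < r\<^sup>2 - g y"
          using insert.prems by (auto simp: g_def abs_less_iff intro!: power_strict_mono)
        moreover have "y \<in> {-(a i + r)..a i + r}" using True by auto
        ultimately show ?thesis
          using insert.IH [of "sqrt (r\<^sup>2 - g y)"] insert.prems by simp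
      next
        case False
        with elim have "r\<^sup>2 < g y"
          using insert.prems by (auto simp: g_def intro!: power_strict_mono)
        then have "box_neighbourhood_sq A a (r\<^sup>2 - g y) = {}"
          by (intro box_neighbourhood_sq_empty) simp
        moreover have "y \<notin> {-(a i + r)..a i + r}" using False elim by auto
        ultimately show ?thesis by simp
      qed
    qed
  qed
  also have "\<dots> = ennreal (box_parallel_volume (insert i A) a r)"
    unfolding g_def using insert.hyps insert.prems by (intro nn_integral_box_parallel_volume_slices) auto
  finally show ?case .
qed

lemma norm_power2_eq_sum_Basis: "(norm y)\<^sup>2 = (\<Sum>b\<in>Basis. (y \<bullet> b)\<^sup>2)"
  unfolding power2_norm_eq_inner euclidean_inner [of y y] by (simp add: power2_eq_square)

lemma centered_box_plus_cball:
  fixes c :: "'a::euclidean_space \<Rightarrow> real"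
  assumes c: "\<And>b. b \<in> Basis \<Longrightarrow> 0 \<le> c b" and \<rho>: "0 \<le> \<rho>"
  shows "{x + y |x y. x \<in> centered_box c \<and> y \<in> cball 0 \<rho>}
       = {z. (\<Sum>b\<in>Basis. (max (\<bar>z \<bullet> b\<bar> - c b) 0)\<^sup>2) \<le> \<rho>\<^sup>2}"
proof (intro equalityI subsetI)
  fix z assume "z \<in> {x + y |x y. x \<in> centered_box c \<and> y \<in> cball 0 \<rho>}"
  then obtain x y where z: "z = x + y" and x: "x \<in> centered_box c" and y: "norm y \<le> \<rho>"
    by auto
  have "(\<Sum>b\<in>Basis. (max (\<bar>z \<bullet> b\<bar> - c b) 0)\<^sup>2) \<le> (\<Sum>b\<in>Basis. (y \<bullet> b)\<^sup>2)"
  proof (intro sum_mono)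
    fix b :: 'a assume b: "b \<in> Basis"
    have "\<bar>z \<bullet> b\<bar> \<le> \<bar>x \<bullet> b\<bar> + \<bar>y \<bullet> b\<bar>" unfolding z by (simp add: inner_add_left abs_triangle_ineq)
    then have "max (\<bar>z \<bullet> b\<bar> - c b) 0 \<le> \<bar>y \<bullet> b\<bar>" using x b by (auto simp: centered_box_def)
    then show "(max (\<bar>z \<bullet> b\<bar> - c b) 0)\<^sup>2 \<le> (y \<bullet> b)\<^sup>2"
      using power_mono[of _ "\<bar>y \<bullet> b\<bar>" 2] by simp
  qed
  also have "\<dots> \<le> \<rho>\<^sup>2" using y by (simp add: norm_power2_eq_sum_Basis [symmetric] power_mono)
  finally show "z \<in> {z. (\<Sum>b\<in>Basis. (max (\<bar>z \<bullet> b\<bar> - c b) 0)\<^sup>2) \<le> \<rho>\<^sup>2}" by simp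
next
  fix z :: 'a assume z: "z \<in> {z. (\<Sum>b\<in>Basis. (max (\<bar>z \<bullet> b\<bar> - c b) 0)\<^sup>2) \<le> \<rho>\<^sup>2}"
  define x where "x = (\<Sum>b\<in>Basis. max (- c b) (min (c b) (z \<bullet> b)) *\<^sub>R b)"
  have "x \<in> centered_box c" using c by (auto simp: x_def centered_box_def abs_le_iff)
  moreover have "norm (z - x) \<le> \<rho>"
  proof -
    have "\<bar>(z - x) \<bullet> b\<bar> = max (\<bar>z \<bullet> b\<bar> - c b) 0" if "b \<in> Basis" for b
      using c[OF that] that by (auto simp: x_def inner_diff_left abs_if max_def min_def)
    then have "(norm (z - x))\<^sup>2 = (\<Sum>b\<in>Basis. (max (\<bar>z \<bullet> b\<bar> - c b) 0)\<^sup>2)"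
      unfolding norm_power2_eq_sum_Basis by (metis (no_types, lifting) power2_abs sum.cong)
    also have "\<dots> \<le> \<rho>\<^sup>2" using z by simp
    finally show ?thesis using \<rho> by (simp add: power2_le_iff_abs_le)
  qed
  moreover have "z = x + (z - x)" by simp
  ultimately show "z \<in> {x + y |x y. x \<in> centered_box c \<and> y \<in> cball 0 \<rho>}"
    by (metis (mono_tags, lifting) dist_0_norm mem_Collect_eq mem_cball)
qed

lemma measure_centered_box_plus_cball:
  fixes c :: "'a::euclidean_space \<Rightarrow> real"
  assumes c: "\<And>b. b \<in> Basis \<Longrightarrow> 0 \<le> c b" and \<rho>: "0 < \<rho>"
  shows "measure lebesgue {x + y |x y. x \<in> centered_box c \<and> y \<in> cball 0 \<rho>}
       = box_parallel_volume Basis c \<rho>"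
proof -
  define N where "N = {z::'a. (\<Sum>b\<in>Basis. (max (\<bar>z \<bullet> b\<bar> - c b) 0)\<^sup>2) \<le> \<rho>\<^sup>2}"
  have "closed N" unfolding N_def by (intro closed_Collect_le continuous_intros)
  then have N: "N \<in> sets lborel" by simp
  have "emeasure lborel N = emeasure (distr (Pi\<^sub>M Basis (\<lambda>_. lborel)) borel (\<lambda>f. \<Sum>b\<in>Basis. f b *\<^sub>R b)) N"
    by (subst lborel_eq) rule
  also have "\<dots> = emeasure (Pi\<^sub>M Basis (\<lambda>_. lborel)) (box_neighbourhood_sq Basis c (\<rho>\<^sup>2))"
  proof -
    have "(\<lambda>f. \<Sum>b\<in>Basis. f b *\<^sub>R b) -` N \<inter> space (Pi\<^sub>M Basis (\<lambda>_. lborel))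
        = box_neighbourhood_sq Basis c (\<rho>\<^sup>2)"
      by (auto simp: N_def box_neighbourhood_sq_def)
    then show ?thesis using N by (subst emeasure_distr) simp_all
  qed
  also have "\<dots> = ennreal (box_parallel_volume Basis c \<rho>)"
    using c \<rho> by (intro emeasure_box_neighbourhood_sq) auto
  finally have "measure lborel N = box_parallel_volume Basis c \<rho>"
    using box_parallel_volume_nonneg[of Basis c \<rho>] c \<rho> by (simp add: measure_def)
  moreover have "{x + y |x y. x \<in> centered_box c \<and> y \<in> cball 0 \<rho>} = N"
    unfolding N_def using c \<rho> by (intro centered_box_plus_cball) auto
  ultimately show ?thesis using N by (simp add: measure_completion)
qed

lemma box_parallel_volume_eq_sum_card:
  assumes "finite A"
  shows "box_parallel_volume A a r
       = (\<Sum>k\<le>card A. r ^ (card A - k) * unit_ball_vol (card A - k) * (\<Sum>T | T \<subseteq> A \<and> card T = k. \<Prod>i\<in>T. 2 * a i))"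
proof -
  have "box_parallel_volume A a r = (\<Sum>k\<le>card A. \<Sum>T\<in>{T \<in> Pow A. card T = k}.
      (\<Prod>i\<in>T. 2 * a i) * unit_ball_vol (card (A - T)) * r ^ card (A - T))"
    unfolding box_parallel_volume_def using assms
    by (intro sum.group [symmetric]) (auto intro: card_mono)
  also have "\<dots> = (\<Sum>k\<le>card A. \<Sum>T\<in>{T \<in> Pow A. card T = k}.
      r ^ (card A - k) * unit_ball_vol (card A - k) * (\<Prod>i\<in>T. 2 * a i))"
    using assms by (intro sum.cong refl) (auto simp: card_Diff_subset finite_subset mult_ac)
  finally show ?thesis by (simp add: sum_distrib_left Pow_def)
qed

section \<open>Intrinsic volumes of boxes\<close>

lemma polyfun_eq_coeffs_on_pos:
  fixes c d :: "nat \<Rightarrow> real"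
  assumes "\<And>x. 0 < x \<Longrightarrow> (\<Sum>i\<le>n. c i * x ^ i) = (\<Sum>i\<le>n. d i * x ^ i)" and "i \<le> n"
  shows "c i = d i"
proof -
  have "{0<..} \<subseteq> {x. (\<Sum>i\<le>n. (c i - d i) * x ^ i) = 0}"
    using assms(1) by (auto simp: left_diff_distrib sum_subtractf)
  then have "infinite {x. (\<Sum>i\<le>n. (c i - d i) * x ^ i) = 0}"
    using infinite_Ioi finite_subset by blast
  then show ?thesis using polyfun_finite_roots[of "\<lambda>i. c i - d i" n] assms(2) by auto
qed

lemma kappa_eq_unit_ball_vol: "kappa d = unit_ball_vol (real d)"
  by (simp add: kappa_def unit_ball_vol_def)

lemma steiner_coeffs_unique:
  fixes U W :: "nat \<Rightarrow> real"
  assumes "\<And>\<rho>. 0 < \<rho> \<Longrightarrow> (\<Sum>i\<le>n. \<rho> ^ (n - i) * kappa (n - i) * U i)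
                          = (\<Sum>i\<le>n. \<rho> ^ (n - i) * kappa (n - i) * W i)"
    and i: "i \<le> n"
  shows "U i = W i"
proof -
  have rev: "(\<Sum>i\<le>n. \<rho> ^ (n - i) * kappa (n - i) * V i) = (\<Sum>k\<le>n. (kappa k * V (n - k)) * \<rho> ^ k)"
    for V and \<rho> :: real
    by (rule sum.reindex_bij_witness [of _ "\<lambda>k. n - k" "\<lambda>i. n - i"]) (auto simp: mult_ac)
  have "kappa (n - i) * U (n - (n - i)) = kappa (n - i) * W (n - (n - i))"
    using assms(1) unfolding rev
    by (rule polyfun_eq_coeffs_on_pos [where c = "\<lambda>k. kappa k * U (n - k)"
        and d = "\<lambda>k. kappa k * W (n - k)"]) simp_all
  moreover have "0 < kappa (n - i)" by (simp add: kappa_eq_unit_ball_vol)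
  ultimately show ?thesis using i by simp
qed

lemma intrinsic_volume_eqI:
  fixes K :: "'a::euclidean_space set"
  assumes steiner: "\<And>\<rho>. 0 < \<rho> \<Longrightarrow> measure lebesgue {x + y |x y. x \<in> K \<and> y \<in> cball 0 \<rho>}
      = (\<Sum>i\<le>DIM('a). \<rho> ^ (DIM('a) - i) * kappa (DIM('a) - i) * V i)"
    and "j \<le> DIM('a)"
  shows "intrinsic_volume j K = V j"
proof -
  define n where "n = DIM('a)"
  define m where "m \<rho> = measure lebesgue {x + y |x y. x \<in> K \<and> y \<in> cball 0 \<rho>}" for \<rho>
  define steiner_coeffs where "steiner_coeffs U \<longleftrightarrow>
      (\<forall>i>n. U i = 0) \<and> (\<forall>\<rho>>0. m \<rho> = (\<Sum>i\<le>n. \<rho> ^ (n - i) * kappa (n - i) * U i))" for U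
  define W where "W i = (if i \<le> n then V i else 0)" for i
  have W: "steiner_coeffs W"
    unfolding steiner_coeffs_def
  proof (intro conjI allI impI)
    fix \<rho> :: real assume "0 < \<rho>"
    then have "m \<rho> = (\<Sum>i\<le>n. \<rho> ^ (n - i) * kappa (n - i) * V i)"
      using steiner by (simp add: m_def n_def)
    also have "\<dots> = (\<Sum>i\<le>n. \<rho> ^ (n - i) * kappa (n - i) * W i)"
      by (intro sum.cong) (auto simp: W_def)
    finally show "m \<rho> = (\<Sum>i\<le>n. \<rho> ^ (n - i) * kappa (n - i) * W i)" .
  qed (simp add: W_def)
  have unique: "U = W" if U: "steiner_coeffs U" for U
  proof
    fix i show "U i = W i"
    proof (cases "i \<le> n")
      case True
      have "(\<Sum>i\<le>n. \<rho> ^ (n - i) * kappa (n - i) * U i) = (\<Sum>i\<le>n. \<rho> ^ (n - i) * kappa (n - i) * W i)"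
        if "0 < \<rho>" for \<rho> :: real
        using U W that unfolding steiner_coeffs_def by metis
      then show ?thesis using True by (rule steiner_coeffs_unique)
    qed (use U W in \<open>simp add: steiner_coeffs_def\<close>)
  qed
  have "intrinsic_volume j K = (THE U. steiner_coeffs U) j"
    by (simp add: intrinsic_volume_def steiner_coeffs_def m_def n_def)
  also have "(THE U. steiner_coeffs U) = W" using W unique by (rule the_equality)
  finally show ?thesis using assms(2) by (simp add: W_def n_def)
qed

lemma intrinsic_volume_centered_box:
  fixes c :: "'a::euclidean_space \<Rightarrow> real"
  assumes "\<And>b. b \<in> Basis \<Longrightarrow> 0 \<le> c b" and "j \<le> DIM('a)"
  shows "intrinsic_volume j (centered_box c) = (\<Sum>T | T \<subseteq> Basis \<and> card T = j. \<Prod>b\<in>T. 2 * c b)"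
proof (rule intrinsic_volume_eqI [where V = "\<lambda>k. \<Sum>T | T \<subseteq> Basis \<and> card T = k. \<Prod>b\<in>T. 2 * c b"])
  fix \<rho> :: real assume "0 < \<rho>"
  then have "measure lebesgue {x + y |x y. x \<in> centered_box c \<and> y \<in> cball 0 \<rho>}
      = box_parallel_volume Basis c \<rho>"
    using assms(1) by (rule measure_centered_box_plus_cball [rotated])
  then show "measure lebesgue {x + y |x y. x \<in> centered_box c \<and> y \<in> cball 0 \<rho>}
      = (\<Sum>i\<le>DIM('a). \<rho> ^ (DIM('a) - i) * kappa (DIM('a) - i)
          * (\<Sum>T | T \<subseteq> Basis \<and> card T = i. \<Prod>b\<in>T. 2 * c b))"
    by (simp add: box_parallel_volume_eq_sum_card kappa_eq_unit_ball_vol)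
qed (rule assms(2))

lemma intrinsic_volume_centered_box_stretched:
  fixes b0 :: "'a::euclidean_space"
  assumes b0: "b0 \<in> Basis" and s: "0 \<le> s" and j: "1 \<le> j" "j \<le> DIM('a)"
  shows "intrinsic_volume j (centered_box (\<lambda>b. if b = b0 then s else 1) :: 'a set)
       = 2 ^ j * (real (DIM('a) - 1 choose j) + s * real (DIM('a) - 1 choose (j - 1)))"
proof -
  define F where "F = {T. T \<subseteq> (Basis :: 'a set) \<and> card T = j}"
  have fin: "finite F" unfolding F_def by (rule finite_subset [of _ "Pow Basis"]) auto
  have "card {T \<in> F. b0 \<notin> T} = card {T. T \<subseteq> Basis - {b0} \<and> card T = j}"
    by (rule arg_cong [where f = card]) (auto simp: F_def)
  then have without_b0: "card {T \<in> F. b0 \<notin> T} = DIM('a) - 1 choose j"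
    using b0 by (simp add: n_subsets)
  have "card {T \<in> F. b0 \<in> T} + card {T \<in> F. b0 \<notin> T} = card F"
    using fin by (subst card_Un_disjoint [symmetric]) (auto intro: arg_cong [where f = card])
  also have "card F = DIM('a) choose j" by (simp add: F_def n_subsets)
  also have "\<dots> = (DIM('a) - 1 choose (j - 1)) + (DIM('a) - 1 choose j)"
    using j binomial_Suc_Suc [of "DIM('a) - 1" "j - 1"] by simp
  finally have with_b0: "card {T \<in> F. b0 \<in> T} = DIM('a) - 1 choose (j - 1)"
    using without_b0 by simp
  have prod: "(\<Prod>b\<in>T. 2 * (if b = b0 then s else 1)) = 2 ^ j * (if b0 \<in> T then s else 1)"
    if "T \<in> F" for T
    using that fin by (auto simp: F_def prod.distrib prod.delta finite_subset)
  have "intrinsic_volume j (centered_box (\<lambda>b. if b = b0 then s else 1) :: 'a set)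
      = (\<Sum>T\<in>F. 2 ^ j * (if b0 \<in> T then s else 1))"
    using s j by (simp add: intrinsic_volume_centered_box F_def [symmetric] prod cong: sum.cong)
  also have "\<dots> = 2 ^ j * (s * card {T \<in> F. b0 \<in> T} + card {T \<in> F. b0 \<notin> T})"
    using fin by (simp add: sum_distrib_left [symmetric] sum.If_cases Int_def)
  finally show ?thesis by (simp add: with_b0 without_b0 algebra_simps)
qed

theorem theorem1p1:
  fixes p lam :: real and j :: nat
  assumes "DIM('a::euclidean_space) \<ge> 3"
    and "2 \<le> j" and "j \<le> DIM('a) - 1"
    and "0 \<le> p" and "p < 1"
    and "0 < lam" and "lam < 1"
  shows "\<exists>K L :: 'a set. convex_body K \<and> convex_body L \<and>
           origin_symmetric K \<and> origin_symmetric L \<and>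
           intrinsic_volume j (Lp_comb p lam K L)
             < intrinsic_volume j K powr (1 - lam) * intrinsic_volume j L powr lam \<and>
           intrinsic_volume j K powr (1 - lam) * intrinsic_volume j L powr lam
             \<le> (if p = 0 then intrinsic_volume j K powr (1 - lam) * intrinsic_volume j L powr lam
                else ((1 - lam) * intrinsic_volume j K powr (p / real j)
                      + lam * intrinsic_volume j L powr (p / real j)) powr (real j / p))"
proof -
  \<comment> \<open>The hypothesis on \<open>DIM('a)\<close> is implied by the bounds on \<open>j\<close>.\<close>
  note j = assms(2,3) and p = assms(4,5) and lam = assms(6,7)
  obtain b0 :: 'a where b0: "b0 \<in> Basis" using nonempty_Basis by blast
  define N1 N2 where "N1 = real (DIM('a) - 1 choose j)" and "N2 = real (DIM('a) - 1 choose (j - 1))"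
  have N: "0 < N1" "0 < N2" using j by (auto simp: N1_def N2_def)
  define cuboid :: "real \<Rightarrow> 'a set" where "cuboid s = centered_box (\<lambda>b. if b = b0 then s else 1)" for s
  have V: "intrinsic_volume j (cuboid s) = 2 ^ j * (N1 + N2 * s)" if "0 \<le> s" for s
    using intrinsic_volume_centered_box_stretched [OF b0 that] j
    by (simp add: cuboid_def N1_def N2_def mult.commute)
  obtain s t where st: "0 < s" "0 < t"
    and gap: "N1 + N2 * power_mean p lam s t < power_mean 0 lam (N1 + N2 * s) (N1 + N2 * t)"
    using exists_affine_power_mean_less_geometric_mean [OF N lam p] by blast
  have "Lp_comb p lam (cuboid s) (cuboid t) = cuboid (power_mean p lam s t)"
    unfolding cuboid_def using st lam p
    by (subst Lp_comb_centered_box) (auto intro!: arg_cong [where f = centered_box] simp: power_mean_same)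
  then have "intrinsic_volume j (Lp_comb p lam (cuboid s) (cuboid t))
      < power_mean 0 lam (intrinsic_volume j (cuboid s)) (intrinsic_volume j (cuboid t))"
    using gap N st lam
    by (simp add: V power_mean_nonneg power_mean_mult less_imp_le)
  moreover have "0 < intrinsic_volume j (cuboid s)" "0 < intrinsic_volume j (cuboid t)"
    using N st by (simp_all add: V add_pos_pos)
  moreover have "convex_body (cuboid r)" "origin_symmetric (cuboid r)" if "0 < r" for r
    using that by (auto simp: cuboid_def intro: convex_body_centered_box origin_symmetric_centered_box)
  ultimately show ?thesis
    using st p lam j geometric_mean_le_power_mean [of _ _ lam "p / real j"]
    by (intro exI [of _ "cuboid s"] exI [of _ "cuboid t"]) (auto simp: power_mean_def)
qed

end
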